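(* Fix a positive integer $s$, and let $h_{s,i,j}$ and $H_i(x)=\sum_{j\ge i+1}h_{s,i,j}x^j$ be as in the context. Then for every integer $0\le i\le 2s-1$, $$H_i=\sum_{j=0}^{i}(-1)^{j+1}\binom{s}{j}x^j+(-1)^{i+1}\binom{2s}{i}\frac{x^{i+1}}{(1-x)^{s+1}}+(-1)^i(2s-i)\binom{2s}{i}\sum_{t=0}^{i}(-1)^t\binom{i}{t}\frac{1}{2s-t}\frac{1}{(1-x)^{s-t}},$$ as an identity of formal power series (equivalently of rational functions) in $x$.
   Context: For a fixed positive integer $s$, the numbers $h_{s,i,j}$ (integers $i\ge 0$, $j$) are defined recursively by: $h_{s,i,j}=0$ if $j\le i$; for $i=0$ and $j\ge 1$, $h_{s,0,j}=\binom{s+j-1}{j}\frac{s-j}{s}$; for $i>0$ and $j>i$, $h_{s,i,j}=-\frac{s-j+1}{i}h_{s,i-1,j-1}-\frac{j-i}{i}h_{s,i-1,j}$. $H_i(x)=\sum_{j\ge i+1}h_{s,i,j}x^j$. *)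

theory Defs
  imports "HOL-Computational_Algebra.Formal_Power_Series"
begin

text \<open>The numbers h(s,i,j); the index j ranges over naturals since h(s,i,j) = 0 for j \<le> i and i \<ge> 0.\<close>
fun hcoef :: "nat \<Rightarrow> nat \<Rightarrow> nat \<Rightarrow> real" where
  "hcoef s 0 j =
     (if j = 0 then 0
      else real ((s + j - 1) choose j) * (real s - real j) / real s)"
| "hcoef s (Suc i) j =
     (if j \<le> Suc i then 0
      else - ((real s - real j + 1) / real (Suc i)) * hcoef s i (j - 1)
           - ((real j - real (Suc i)) / real (Suc i)) * hcoef s i j)"

definition Hfps :: "nat \<Rightarrow> nat \<Rightarrow> real fps" where
  "Hfps s i = Abs_fps (hcoef s i)"

text \<open>The formal power series 1/(1-x)^k for an integer exponent k (here k = s - t).\<close>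
definition inv_one_minus_X_pow :: "int \<Rightarrow> real fps" where
  "inv_one_minus_X_pow k =
     (if k \<ge> 0 then inverse ((1 - fps_X) ^ nat k) else (1 - fps_X) ^ nat (- k))"

end

theory Submission
  imports Defs
begin

(* The recurrence for h(s,i,j) says that H_{i+1} = H_i + ((x^2 - x) H_i' - s x H_i) / (i + 1).
   This operator sends x^m (1-x)^(-k) to a combination of x^m (1-x)^(-k) and x^(m+1) (1-x)^(-k),
   and x (1-x)^(-k) = (1-x)^(-k) - (1-x)^(-(k-1)).  Hence it maps each of the three summands of
   the claimed formula for H_i (the polynomial, the pole term x^(i+1) / (1-x)^(s+1) and the
   combination of the powers (1-x)^(-(s-t))) to the corresponding summand for i + 1, the required
   coefficient identities all reducing to (k+1) C(n,k+1) = (n-k) C(n,k).  Induction on i, starting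
   from the closed form of H_0, gives the claim; i < 2s keeps the denominators 2s - t nonzero. *)

unbundle fps_syntax

lemma Suc_times_binomial_real:
  "real (Suc k) * real (n choose Suc k) = (real n - real k) * real (n choose k)"
proof (cases "k \<le> n")
  case True
  have "Suc k * (n choose Suc k) = (n - k) * (n choose k)"
    by (simp only: binomial_absorption binomial_absorb_comp)
  then show ?thesis
    using True by (metis of_nat_diff of_nat_mult)
qed (simp add: binomial_eq_0)

lemma binomial_Suc_real: "real (n choose Suc k) = (real n - real k) / real (Suc k) * real (n choose k)"
  using Suc_times_binomial_real[of k n] by (simp add: field_simps del: of_nat_Suc)

lemma Suc_times_binomial_mult_binomial_real:
  "real (Suc t) * (real (n choose Suc i) * real (Suc i choose Suc t))
     = (real n - real i) * real (n choose i) * real (i choose t)"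
proof -
  have "real (Suc i) * real (n choose Suc i) = (real n - real i) * real (n choose i)"
    "real (Suc t) * real (Suc i choose Suc t) = real (Suc i) * real (i choose t)"
    by (rule Suc_times_binomial_real) (metis Suc_times_binomial of_nat_mult)
  then have "real (Suc i) * (real (Suc t) * (real (n choose Suc i) * real (Suc i choose Suc t)))
      = real (Suc i) * ((real n - real i) * real (n choose i) * real (i choose t))"
    by algebra
  then show ?thesis
    by (metis mult_cancel_left of_nat_eq_0_iff nat.distinct(1))
qed

lemma inv_one_minus_X_pow_nonneg:
  "k \<ge> 0 \<Longrightarrow> inv_one_minus_X_pow k = inverse (1 - fps_X) ^ nat k"
  by (simp add: inv_one_minus_X_pow_def fps_inverse_power)

lemma one_minus_X_times_inv_one_minus_X_pow:
  "(1 - fps_X) * inv_one_minus_X_pow (k + 1) = inv_one_minus_X_pow k"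
proof (cases "k \<ge> 0")
  case True
  have "(1 - fps_X) * inverse (1 - fps_X :: real fps) = 1"
    by (simp add: inverse_mult_eq_1')
  then show ?thesis
    using True by (simp add: inv_one_minus_X_pow_nonneg nat_add_distrib mult.assoc[symmetric])
next
  case False
  then have "nat (- k) = Suc (nat (- (k + 1)))"
    by simp
  then show ?thesis
    using False by (auto simp: inv_one_minus_X_pow_def)
qed

lemma fps_deriv_inv_one_minus_X_pow:
  "fps_deriv (inv_one_minus_X_pow k) = fps_const (of_int k) * inv_one_minus_X_pow (k + 1)"
proof (cases "k \<ge> 0")
  case True
  then obtain n where n: "k = int n"
    by (metis nonneg_int_cases)
  define I :: "real fps" where "I = inverse (1 - fps_X)"
  have "fps_deriv I = I * I"
    by (simp add: I_def fps_inverse_deriv power2_eq_square)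
  then have "fps_deriv (I ^ n) = fps_const (real n) * I ^ Suc n"
  proof (induction n)
    case (Suc n)
    then show ?case
      by (simp add: fps_const_add[symmetric] algebra_simps del: fps_const_add)
  qed simp
  moreover have "inv_one_minus_X_pow k = I ^ n" "inv_one_minus_X_pow (k + 1) = I ^ Suc n"
    using inv_one_minus_X_pow_nonneg[of k] inv_one_minus_X_pow_nonneg[of "k + 1"]
    by (simp_all add: n I_def nat_add_distrib)
  ultimately show ?thesis
    by (simp add: n)
next
  case False
  then obtain m where m: "k = - int (Suc m)"
    by (cases k) auto
  then have "inv_one_minus_X_pow k = (1 - fps_X) ^ Suc m"
    "inv_one_minus_X_pow (k + 1) = (1 - fps_X) ^ m"
    by (auto simp: inv_one_minus_X_pow_def nat_add_distrib)
  moreover have "fps_deriv ((1 - fps_X :: real fps) ^ Suc m) = - fps_const (real (Suc m)) * (1 - fps_X) ^ m"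
    by (simp only: fps_deriv_power diff_Suc_1) simp
  ultimately show ?thesis
    by (simp add: m)
qed

definition Hstep :: "nat \<Rightarrow> nat \<Rightarrow> real fps \<Rightarrow> real fps" where
  "Hstep s i F = F + fps_const (1 / real (Suc i)) *
     (fps_X * (fps_X - 1) * fps_deriv F - fps_const (real s) * fps_X * F)"

lemma Hstep_add: "Hstep s i (F + G) = Hstep s i F + Hstep s i G"
  by (simp add: Hstep_def algebra_simps)

lemma Hstep_const_mult: "Hstep s i (fps_const c * F) = fps_const c * Hstep s i F"
  by (simp add: Hstep_def algebra_simps)

lemma Hstep_sum: "Hstep s i (\<Sum>x\<in>A. f x) = (\<Sum>x\<in>A. Hstep s i (f x))"
proof (induction A rule: infinite_finite_induct)
  case (insert x A)
  then show ?case
    by (simp add: Hstep_add)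
qed (simp_all add: Hstep_def)

lemma Hstep_nth_0: "Hstep s i F $ 0 = F $ 0"
  by (simp add: Hstep_def)

lemma Hstep_nth_Suc:
  "Hstep s i F $ Suc n =
     F $ Suc n + ((real n - real s) * F $ n - real (Suc n) * F $ Suc n) / real (Suc i)"
proof -
  have "(fps_X * (fps_X - 1) * fps_deriv F) $ Suc n = real n * F $ n - real (Suc n) * F $ Suc n"
    by (cases n) (simp_all add: algebra_simps)
  moreover have "(fps_const (real s) * fps_X * F) $ Suc n = real s * F $ n"
    by (simp add: mult.assoc)
  ultimately show ?thesis
    by (simp only: Hstep_def fps_add_nth fps_sub_nth fps_mult_left_const_nth) (simp add: field_simps)
qed

lemma hcoef_eq_0: "j \<le> i \<Longrightarrow> hcoef s i j = 0"
  by (cases i) auto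

lemma Hfps_Suc: "Hfps s (Suc i) = Hstep s i (Hfps s i)"
proof (rule fps_ext)
  fix n
  show "Hfps s (Suc i) $ n = Hstep s i (Hfps s i) $ n"
  proof (cases n)
    case 0
    then show ?thesis
      by (simp add: Hfps_def Hstep_nth_0 hcoef_eq_0)
  next
    case (Suc m)
    show ?thesis
    proof (cases "m \<le> i")
      case True
      then show ?thesis
        using Suc by (cases "m = i") (simp_all add: Hfps_def Hstep_nth_Suc hcoef_eq_0)
    next
      case False
      have "hcoef s (Suc i) (Suc m) = - ((real s - real (Suc m) + 1) / real (Suc i)) * hcoef s i m
          - ((real (Suc m) - real (Suc i)) / real (Suc i)) * hcoef s i (Suc m)"
        using False by simp
      also have "\<dots> = hcoef s i (Suc m)
          + ((real m - real s) * hcoef s i m - real (Suc m) * hcoef s i (Suc m)) / real (Suc i)"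
        by (simp add: field_simps del: of_nat_Suc) (simp add: algebra_simps)
      finally have "hcoef s (Suc i) (Suc m) = \<dots>" .
      then show ?thesis
        using Suc by (simp add: Hfps_def Hstep_nth_Suc)
    qed
  qed
qed

lemma Hfps_0:
  assumes "s > 0"
  shows "Hfps s 0 = inverse ((1 - fps_X) ^ s) - 1 - fps_X * inverse ((1 - fps_X) ^ Suc s)"
proof (rule fps_ext)
  have inverse_nth: "inverse ((1 - fps_X) ^ k) $ n = real (k + n - 1 choose n)" if "k > 0" for k n
    using one_minus_const_fps_X_neg_power'[OF that, of "1 :: real"] by simp
  fix n
  show "Hfps s 0 $ n = (inverse ((1 - fps_X) ^ s) - 1 - fps_X * inverse ((1 - fps_X) ^ Suc s)) $ n"
  proof (cases n)
    case (Suc m)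
    have "real (Suc m) * real (s + m choose Suc m) = real s * real (s + m choose m)"
      using Suc_times_binomial_real[of m "s + m"] by simp
    moreover have "inverse ((1 - fps_X) ^ s) $ Suc m = real (s + m choose Suc m)"
      "(fps_X * inverse ((1 - fps_X) ^ Suc s)) $ Suc m = real (s + m choose m)"
      using assms by (simp_all add: inverse_nth del: power_Suc)
    ultimately show ?thesis
      using Suc assms by (simp add: Hfps_def field_simps)
  qed (simp add: Hfps_def inverse_nth assms fps_nth_power_0)
qed

lemma fps_X_mult_deriv_X_power:
  "fps_X * fps_deriv (fps_X ^ m) = fps_const (of_nat m :: 'a :: comm_ring_1) * fps_X ^ m"
  by (rule fps_ext) (auto simp: fps_X_power_iff)

lemma Hstep_X_power_mult_inv_one_minus_X_pow:
  "Hstep s i (fps_X ^ m * inv_one_minus_X_pow k) =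
     fps_const (1 - real m / real (Suc i)) * (fps_X ^ m * inv_one_minus_X_pow k)
   + fps_const ((real m - real s - of_int k) / real (Suc i)) * (fps_X ^ Suc m * inv_one_minus_X_pow k)"
proof -
  have shift: "(fps_X - 1) * inv_one_minus_X_pow (k + 1) = - inv_one_minus_X_pow k"
    using one_minus_X_times_inv_one_minus_X_pow[of k] by (simp add: algebra_simps)
  have "fps_X * (fps_X - 1) * fps_deriv (fps_X ^ m * inv_one_minus_X_pow k)
      = (fps_X - 1) * (fps_X * fps_deriv (fps_X ^ m)) * inv_one_minus_X_pow k
        + fps_const (of_int k) * fps_X ^ Suc m * ((fps_X - 1) * inv_one_minus_X_pow (k + 1))"
    by (simp add: fps_deriv_inv_one_minus_X_pow algebra_simps)
  also have "\<dots> = fps_const (real m) * (fps_X ^ Suc m * inv_one_minus_X_pow k)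
      - fps_const (real m) * (fps_X ^ m * inv_one_minus_X_pow k)
      - fps_const (of_int k) * (fps_X ^ Suc m * inv_one_minus_X_pow k)"
    by (simp only: fps_X_mult_deriv_X_power shift) (simp add: algebra_simps)
  finally have deriv_part: "fps_X * (fps_X - 1) * fps_deriv (fps_X ^ m * inv_one_minus_X_pow k) = \<dots>" .
  have shift_X: "fps_const (real s) * fps_X * (fps_X ^ m * inv_one_minus_X_pow k)
      = fps_const (real s) * (fps_X ^ Suc m * inv_one_minus_X_pow k)"
    by (simp add: mult.assoc)
  show ?thesis
    unfolding Hstep_def deriv_part shift_X
    by (simp only: fps_eq_iff fps_add_nth fps_sub_nth fps_mult_left_const_nth)
      (simp add: field_simps del: of_nat_Suc)
qed

lemma Hstep_sum_shift:
  assumes basis: "\<And>t. Hstep s i (e t) = fps_const (\<alpha> t) * e t + fps_const (\<beta> t) * e (Suc t)"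
    and top: "c (Suc n) * \<alpha> (Suc n) = 0"
    and d_0: "d 0 = c 0 * \<alpha> 0"
    and d_Suc: "\<And>t. t \<le> n \<Longrightarrow> d (Suc t) = c (Suc t) * \<alpha> (Suc t) + c t * \<beta> t"
  shows "Hstep s i (\<Sum>t = 0..n. fps_const (c t) * e t) = (\<Sum>t = 0..Suc n. fps_const (d t) * e t)"
proof -
  have "Hstep s i (\<Sum>t = 0..n. fps_const (c t) * e t)
      = (\<Sum>t = 0..n. fps_const (c t * \<alpha> t) * e t)
        + (\<Sum>t = 0..n. fps_const (c t * \<beta> t) * e (Suc t))"
    by (simp only: Hstep_sum Hstep_const_mult basis distrib_left sum.distrib)
      (simp add: mult.assoc flip: fps_const_mult)
  also have "(\<Sum>t = 0..n. fps_const (c t * \<alpha> t) * e t)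
      = (\<Sum>t = 0..Suc n. fps_const (c t * \<alpha> t) * e t)"
    using top by simp
  also have "\<dots> = fps_const (d 0) * e 0
      + (\<Sum>t = 0..n. fps_const (c (Suc t) * \<alpha> (Suc t)) * e (Suc t))"
    by (simp only: sum.atLeast0_atMost_Suc_shift d_0 o_def)
  also have "\<dots> + (\<Sum>t = 0..n. fps_const (c t * \<beta> t) * e (Suc t))
      = fps_const (d 0) * e 0 + (\<Sum>t = 0..n. fps_const (d (Suc t)) * e (Suc t))"
    using d_Suc by (simp add: add.assoc sum.distrib[symmetric] distrib_right[symmetric])
  also have "\<dots> = (\<Sum>t = 0..Suc n. fps_const (d t) * e t)"
    by (simp only: sum.atLeast0_atMost_Suc_shift o_def)
  finally show ?thesis .
qed

definition H_polynomial_part :: "nat \<Rightarrow> nat \<Rightarrow> real fps" where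
  "H_polynomial_part s i = (\<Sum>j = 0..i. fps_const ((-1) ^ (j + 1) * real (s choose j)) * fps_X ^ j)"

lemma Hstep_H_polynomial_part: "Hstep s i (H_polynomial_part s i) = H_polynomial_part s (Suc i)"
  unfolding H_polynomial_part_def
proof (rule Hstep_sum_shift)
  fix j
  show "Hstep s i (fps_X ^ j) = fps_const (1 - real j / real (Suc i)) * fps_X ^ j
      + fps_const ((real j - real s) / real (Suc i)) * fps_X ^ Suc j"
    using Hstep_X_power_mult_inv_one_minus_X_pow[of s i j 0]
    by (simp add: inv_one_minus_X_pow_def)
next
  fix j
  show "(-1) ^ (Suc j + 1) * real (s choose Suc j) =
      (-1) ^ (Suc j + 1) * real (s choose Suc j) * (1 - real (Suc j) / real (Suc i))
    + (-1) ^ (j + 1) * real (s choose j) * ((real j - real s) / real (Suc i))"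
    by (simp add: binomial_Suc_real field_simps del: of_nat_Suc)
qed simp_all

definition H_pole_part :: "nat \<Rightarrow> nat \<Rightarrow> real fps" where
  "H_pole_part s i = fps_const ((-1) ^ (i + 1) * real ((2 * s) choose i)) * fps_X ^ (i + 1)
     * inverse ((1 - fps_X) ^ (s + 1))"

lemma Hstep_H_pole_part: "Hstep s i (H_pole_part s i) = H_pole_part s (Suc i)"
proof -
  have pole: "inverse ((1 - fps_X) ^ (s + 1)) = inv_one_minus_X_pow (int s + 1)"
    by (simp add: inv_one_minus_X_pow_def nat_add_distrib)
  have "(-1) ^ (i + 1) * real (2 * s choose i) * ((real (Suc i) - real s - of_int (int s + 1)) / real (Suc i))
      = (-1) ^ (Suc i + 1) * real (2 * s choose Suc i)"
    by (simp add: binomial_Suc_real field_simps del: of_nat_Suc) (simp add: algebra_simps)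
  moreover have "H_pole_part s i = fps_const ((-1) ^ (i + 1) * real (2 * s choose i))
      * (fps_X ^ Suc i * inv_one_minus_X_pow (int s + 1))"
    "H_pole_part s (Suc i) = fps_const ((-1) ^ (Suc i + 1) * real (2 * s choose Suc i))
      * (fps_X ^ Suc (Suc i) * inv_one_minus_X_pow (int s + 1))"
    unfolding H_pole_part_def pole by (simp_all only: mult.assoc Suc_eq_plus1)
  ultimately show ?thesis
    by (simp only: Hstep_const_mult Hstep_X_power_mult_inv_one_minus_X_pow) simp
qed

lemma Hstep_inv_one_minus_X_pow:
  "Hstep s i (inv_one_minus_X_pow k) =
     fps_const (1 - (real s + of_int k) / real (Suc i)) * inv_one_minus_X_pow k
   + fps_const ((real s + of_int k) / real (Suc i)) * inv_one_minus_X_pow (k - 1)"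
proof -
  have "fps_X ^ Suc 0 * inv_one_minus_X_pow k = inv_one_minus_X_pow k - inv_one_minus_X_pow (k - 1)"
    using one_minus_X_times_inv_one_minus_X_pow[of "k - 1"] by (simp add: algebra_simps)
  then show ?thesis
    using Hstep_X_power_mult_inv_one_minus_X_pow[of s i 0 k]
    by (simp only: power_0 mult_1_left fps_eq_iff fps_add_nth fps_sub_nth fps_mult_left_const_nth)
      (simp add: field_simps del: of_nat_Suc)
qed

definition inverse_powers_coeff :: "nat \<Rightarrow> nat \<Rightarrow> nat \<Rightarrow> real" where
  "inverse_powers_coeff s i t = (-1) ^ i * (real (2 * s) - real i) * real ((2 * s) choose i)
     * ((-1) ^ t * real (i choose t) / (real (2 * s) - real t))"

lemma inverse_powers_coeff_Suc_0:
  "inverse_powers_coeff s (Suc i) 0 = inverse_powers_coeff s i 0 * (1 - real (2 * s) / real (Suc i))"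
  by (simp add: inverse_powers_coeff_def binomial_Suc_real field_simps del: of_nat_Suc)

lemma inverse_powers_coeff_Suc_Suc:
  assumes "Suc i < 2 * s" and "t \<le> i"
  shows "inverse_powers_coeff s (Suc i) (Suc t) =
      inverse_powers_coeff s i (Suc t) * (1 - (real (2 * s) - real (Suc t)) / real (Suc i))
    + inverse_powers_coeff s i t * ((real (2 * s) - real t) / real (Suc i))"
proof -
  define S I T where "S = real (2 * s)" and "I = real i" and "T = real t"
  define K where "K = (-1) ^ (i + t) * (S - I) * real (2 * s choose i) * real (i choose t)"
  have nonzero: "S - (1 + T) \<noteq> 0" "S - T \<noteq> 0" "1 + I \<noteq> 0" "1 + T \<noteq> 0"
    using assms by (auto simp: S_def T_def I_def add_nonneg_eq_0_iff)
  have at_i_t: "inverse_powers_coeff s i t = K / (S - T)"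
    unfolding inverse_powers_coeff_def K_def S_def[symmetric] I_def[symmetric] T_def[symmetric]
    using nonzero by (simp add: field_simps power_add)
  have at_i_Suc_t: "inverse_powers_coeff s i (Suc t) = - K * (I - T) / ((1 + T) * (S - (1 + T)))"
    unfolding inverse_powers_coeff_def K_def binomial_Suc_real of_nat_Suc
      S_def[symmetric] I_def[symmetric] T_def[symmetric]
    using nonzero by (simp add: field_simps power_add)
  have binomial_product: "real (2 * s choose Suc i) * real (Suc i choose Suc t)
      = (S - I) * real (2 * s choose i) * real (i choose t) / (1 + T)"
    using Suc_times_binomial_mult_binomial_real[of t "2 * s" i] nonzero(4)
    unfolding S_def I_def T_def of_nat_Suc by (metis nonzero_mult_div_cancel_left)
  have "inverse_powers_coeff s (Suc i) (Suc t) = (-1) ^ (i + t) * (S - (1 + I))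
      * (real (2 * s choose Suc i) * real (Suc i choose Suc t)) / (S - (1 + T))"
    unfolding inverse_powers_coeff_def of_nat_Suc S_def[symmetric] I_def[symmetric] T_def[symmetric]
    by (simp add: power_add mult_ac del: binomial_Suc_Suc)
  also have "\<dots> = K * (S - (1 + I)) / ((1 + T) * (S - (1 + T)))"
    unfolding binomial_product K_def using nonzero by (simp add: field_simps)
  finally have at_Suc_i_Suc_t:
    "inverse_powers_coeff s (Suc i) (Suc t) = K * (S - (1 + I)) / ((1 + T) * (S - (1 + T)))" .
  \<comment> \<open>what remains is (S-I-1)(I+1) = (T+1)(S-T-1) - (I-T)(I-S+T+2)\<close>
  show ?thesis
    unfolding at_i_t at_i_Suc_t at_Suc_i_Suc_t of_nat_Suc S_def[symmetric] I_def[symmetric] T_def[symmetric]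
    using nonzero by (simp add: divide_simps) algebra
qed

definition H_inverse_powers_part :: "nat \<Rightarrow> nat \<Rightarrow> real fps" where
  "H_inverse_powers_part s i =
     (\<Sum>t = 0..i. fps_const (inverse_powers_coeff s i t) * inv_one_minus_X_pow (int s - int t))"

lemma Hstep_H_inverse_powers_part:
  assumes "Suc i < 2 * s"
  shows "Hstep s i (H_inverse_powers_part s i) = H_inverse_powers_part s (Suc i)"
  unfolding H_inverse_powers_part_def
proof (rule Hstep_sum_shift)
  fix t
  have "real s + of_int (int s - int t) = real (2 * s) - real t"
    "int s - int t - 1 = int s - int (Suc t)"
    by simp_all
  then show "Hstep s i (inv_one_minus_X_pow (int s - int t)) =
      fps_const (1 - (real (2 * s) - real t) / real (Suc i)) * inv_one_minus_X_pow (int s - int t)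
    + fps_const ((real (2 * s) - real t) / real (Suc i)) * inv_one_minus_X_pow (int s - int (Suc t))"
    using Hstep_inv_one_minus_X_pow[of s i "int s - int t"] by (simp only:)
qed (simp add: inverse_powers_coeff_def,
     simp add: inverse_powers_coeff_Suc_0,
     simp add: inverse_powers_coeff_Suc_Suc assms)

lemma Hfps_eq_parts:
  assumes "s > 0" and "i < 2 * s"
  shows "Hfps s i = H_polynomial_part s i + H_pole_part s i + H_inverse_powers_part s i"
  using assms(2)
proof (induction i)
  case 0
  have "inverse_powers_coeff s 0 0 = 1" "fps_const (-1 :: real) = -1"
    using assms(1) by (simp_all add: inverse_powers_coeff_def flip: fps_const_neg)
  then show ?case
    using assms(1) by (simp add: Hfps_0 H_polynomial_part_def H_pole_part_def
        H_inverse_powers_part_def inv_one_minus_X_pow_def)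
next
  case (Suc i)
  then show ?case
    by (simp add: Hfps_Suc Hstep_add Hstep_H_polynomial_part Hstep_H_pole_part
        Hstep_H_inverse_powers_part)
qed

theorem proposition1:
  fixes s i :: nat
  assumes "s > 0" and "i \<le> 2 * s - 1"
  shows "Hfps s i =
      (\<Sum>j = 0..i. fps_const ((-1) ^ (j + 1) * real (s choose j)) * fps_X ^ j)
    + fps_const ((-1) ^ (i + 1) * real ((2 * s) choose i)) * fps_X ^ (i + 1)
        * inverse ((1 - fps_X) ^ (s + 1))
    + fps_const ((-1) ^ i * (real (2 * s) - real i) * real ((2 * s) choose i))
        * (\<Sum>t = 0..i. fps_const ((-1) ^ t * real (i choose t) / (real (2 * s) - real t))
              * inv_one_minus_X_pow (int s - int t))"
proof -
  have "H_inverse_powers_part s i =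
      fps_const ((-1) ^ i * (real (2 * s) - real i) * real ((2 * s) choose i))
        * (\<Sum>t = 0..i. fps_const ((-1) ^ t * real (i choose t) / (real (2 * s) - real t))
              * inv_one_minus_X_pow (int s - int t))"
    unfolding H_inverse_powers_part_def sum_distrib_left
    by (rule sum.cong) (simp_all add: inverse_powers_coeff_def mult.assoc[symmetric])
  moreover have "i < 2 * s"
    using assms by simp
  ultimately show ?thesis
    using Hfps_eq_parts[OF assms(1)] by (simp add: H_polynomial_part_def H_pole_part_def)
qed

end
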